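(* Let $\zeta:[\sigma,\tau]\to\mathbb R$ be a continuous, strictly increasing, Lipschitz function with $\zeta(\sigma)=0$, and let $F\subset[\sigma,\tau]$ be closed with $\sigma,\tau\in F$ and $\lambda(F)=0$. Then $\lambda(\sqrt{\zeta}(F))=0$, where $\sqrt{\zeta}(x):=\sqrt{\zeta(x)}$ for $x\in[\sigma,\tau]$.
   Context: $\lambda$ denotes Lebesgue measure on $\mathbb R$. *)

theory Defs
  imports "HOL-Analysis.Analysis"
begin

end

theory Submission
  imports Defs
begin

(* Lipschitz maps send null sets to null sets, and sqrt is differentiable away from 0. *)

lemma negligible_lipschitz_image:
  fixes f :: "'M::euclidean_space \<Rightarrow> 'N::euclidean_space"
  assumes "DIM('M) \<le> DIM('N)" and "negligible S" and "L-lipschitz_on S f"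
  shows "negligible (f ` S)"
proof (rule negligible_locally_Lipschitz_image[OF assms(1,2)])
  fix x assume "x \<in> S"
  then have "\<forall>y \<in> S \<inter> UNIV. norm (f y - f x) \<le> L * norm (y - x)"
    using lipschitz_onD[OF assms(3)] by (simp add: dist_norm)
  then show "\<exists>T B. open T \<and> x \<in> T \<and> (\<forall>y \<in> S \<inter> T. norm (f y - f x) \<le> B * norm (y - x))"
    by blast
qed

lemma negligible_differentiable_off_finite_image:
  fixes f :: "'M::euclidean_space \<Rightarrow> 'N::euclidean_space"
  assumes "DIM('M) \<le> DIM('N)" and "negligible S" and "finite K"
    and "f differentiable_on (S - K)"
  shows "negligible (f ` S)"
proof -
  have "negligible (S - K)"
    using \<open>negligible S\<close> by (rule negligible_subset) blast
  then have "negligible (f ` (S - K))"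
    using assms(1,4) by (blast intro: negligible_differentiable_image_negligible)
  moreover have "negligible (f ` K)"
    using \<open>finite K\<close> by (simp add: negligible_finite)
  ultimately have "negligible (f ` (S - K) \<union> f ` K)"
    by (rule negligible_Un)
  then show ?thesis
    by (rule negligible_subset) blast
qed

lemma sqrt_differentiable_on_nonzero: "sqrt differentiable_on (S - {0})"
proof (rule differentiable_at_imp_differentiable_on)
  fix x :: real assume "x \<in> S - {0}"
  then have "DERIV sqrt x :> (if x > 0 then inverse (sqrt x) / 2 else - inverse (sqrt x) / 2)"
    by (intro DERIV_real_sqrt_generic) auto
  then show "sqrt differentiable at x"
    using real_differentiable_def by blast
qed

theorem lemma3p2:
  fixes \<zeta> :: "real \<Rightarrow> real" and \<sigma> \<tau> L :: real and F :: "real set"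
  assumes "continuous_on {\<sigma>..\<tau>} \<zeta>"
    and "strict_mono_on {\<sigma>..\<tau>} \<zeta>"
    and "L-lipschitz_on {\<sigma>..\<tau>} \<zeta>"
    and "\<zeta> \<sigma> = 0"
    and "closed F" and "F \<subseteq> {\<sigma>..\<tau>}" and "\<sigma> \<in> F" and "\<tau> \<in> F"
    and "F \<in> null_sets lebesgue"
  shows "(\<lambda>x. sqrt (\<zeta> x)) ` F \<in> null_sets lebesgue"
proof -
  have "negligible F"
    using \<open>F \<in> null_sets lebesgue\<close> by (simp add: negligible_iff_null_sets)
  moreover have "L-lipschitz_on F \<zeta>"
    using \<open>L-lipschitz_on {\<sigma>..\<tau>} \<zeta>\<close> \<open>F \<subseteq> {\<sigma>..\<tau>}\<close> by (rule lipschitz_on_subset)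
  ultimately have "negligible (\<zeta> ` F)"
    by (rule negligible_lipschitz_image[OF order_refl])
  then have "negligible (sqrt ` \<zeta> ` F)"
    by (rule negligible_differentiable_off_finite_image[OF order_refl _ _
          sqrt_differentiable_on_nonzero]) simp
  then show ?thesis
    by (simp add: image_image negligible_iff_null_sets)
qed

end
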